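(* Let $p,q$ be distributions on $[n]$ and $m_1,m_2>0$. Let $X_i\sim\mathrm{Poisson}(m_1p_i)$ and $Y_i\sim\mathrm{Poisson}(m_2q_i)$, $i\in[n]$, all mutually independent, and let $$Z_i=\frac{(m_2X_i-m_1Y_i)^2-(m_2^2X_i+m_1^2Y_i)}{X_i+Y_i}$$ (with $Z_i=0$ when $X_i+Y_i=0$). For $A\subseteq[n]$, if $p=q$ then $\mathbb E\left[\sum_{i\in A}Z_i\right]=0$, and in general $$\mathbb E\left[\sum_{i\in A}Z_i\right]\geq\frac{m_1^2m_2^2\left(\sum_{i\in A}|p_i-q_i|\right)^2}{4n+m_1+m_2}.$$ *)

theory Defs
  imports "HOL-Probability.Probability"
begin

text \<open>Poisson distribution with rate \<open>r \<ge> 0\<close>; the library's \<open>poisson_pmf\<close> is only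
  specified for positive rates, and Poisson(0) is the point mass at 0.\<close>
definition poisson0 :: "real \<Rightarrow> nat pmf" where
  "poisson0 r = (if 0 < r then poisson_pmf r else return_pmf 0)"

definition Zstat :: "real \<Rightarrow> real \<Rightarrow> nat \<Rightarrow> nat \<Rightarrow> real" where
  "Zstat m1 m2 x y =
     (if x + y = 0 then 0
      else ((m2 * real x - m1 * real y)^2 - (m2^2 * real x + m1^2 * real y)) / real (x + y))"

definition joint_law :: "nat \<Rightarrow> real \<Rightarrow> real \<Rightarrow> (nat \<Rightarrow> real) \<Rightarrow> (nat \<Rightarrow> real)
    \<Rightarrow> (nat \<Rightarrow> nat \<times> nat) pmf" where
  "joint_law n m1 m2 p q =
     Pi_pmf {1..n} (0, 0) (\<lambda>i. pair_pmf (poisson0 (m1 * p i)) (poisson0 (m2 * q i)))"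

definition is_distribution :: "nat \<Rightarrow> (nat \<Rightarrow> real) \<Rightarrow> bool" where
  "is_distribution n p \<longleftrightarrow> (\<forall>i\<in>{1..n}. 0 \<le> p i) \<and> (\<Sum>i=1..n. p i) = 1"

end

theory Submission
  imports Defs
begin

(* Write a = m1 p_i, b = m2 q_i and let X, Y be the independent Poisson counts.
   The Poisson identity E[X f(X)] = a E[f(X + 1)], applied twice, turns X(X-1)/(X+Y), XY/(X+Y) and
   Y(Y-1)/(X+Y) into a^2, ab and b^2 times E[1/(X+Y+2)], so that
   E[Z_i] = (m2 a - m1 b)^2 E[1/(X+Y+2)] = m1^2 m2^2 (p_i - q_i)^2 E[1/(X+Y+2)].
   Bounding 1/u below by its tangent at u = a + b + 2 gives E[1/(X+Y+2)] >= 1/(a+b+2), and the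
   Cauchy-Schwarz inequality with the weights a + b + 2, whose sum over A is at most m1 + m2 + 2n,
   yields the lower bound. *)

lemma weighted_Cauchy_Schwarz:
  fixes d w :: "'a \<Rightarrow> real"
  assumes "\<And>i. i \<in> A \<Longrightarrow> 0 < w i"
  shows "(\<Sum>i\<in>A. \<bar>d i\<bar>)^2 \<le> (\<Sum>i\<in>A. (d i)^2 / w i) * (\<Sum>i\<in>A. w i)"
proof -
  have "\<bar>d i\<bar> = (\<bar>d i\<bar> / sqrt (w i)) * sqrt (w i)" if "i \<in> A" for i
    using assms[OF that] by simp
  then have "(\<Sum>i\<in>A. \<bar>d i\<bar>)^2 = (\<Sum>i\<in>A. (\<bar>d i\<bar> / sqrt (w i)) * sqrt (w i))^2"
    by (metis (no_types, lifting) sum.cong)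
  also have "\<dots> \<le> (\<Sum>i\<in>A. (\<bar>d i\<bar> / sqrt (w i))^2) * (\<Sum>i\<in>A. (sqrt (w i))^2)"
    by (rule Cauchy_Schwarz_ineq_sum)
  also have "\<dots> = (\<Sum>i\<in>A. (d i)^2 / w i) * (\<Sum>i\<in>A. w i)"
    by (intro arg_cong2[where f="(*)"] sum.cong) (auto simp: power_divide less_imp_le[OF assms])
  finally show ?thesis .
qed

lemma sum_abs_squared_div_le:
  fixes d e w :: "'a \<Rightarrow> real"
  assumes w: "\<And>i. i \<in> A \<Longrightarrow> 0 < w i" and e: "\<And>i. i \<in> A \<Longrightarrow> 1 / w i \<le> e i"
    and D: "(\<Sum>i\<in>A. w i) \<le> D"
  shows "(\<Sum>i\<in>A. \<bar>d i\<bar>)^2 / D \<le> (\<Sum>i\<in>A. (d i)^2 * e i)"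
proof -
  have le: "(\<Sum>i\<in>A. (d i)^2 / w i) \<le> (\<Sum>i\<in>A. (d i)^2 * e i)"
    using e by (intro sum_mono) (metis mult_left_mono times_divide_eq_right mult.right_neutral zero_le_power2)
  have "0 \<le> (\<Sum>i\<in>A. (d i)^2 / w i)"
    by (intro sum_nonneg divide_nonneg_pos zero_le_power2 w)
  with le have nonneg: "0 \<le> (\<Sum>i\<in>A. (d i)^2 * e i)" by linarith
  have "(\<Sum>i\<in>A. \<bar>d i\<bar>)^2 \<le> (\<Sum>i\<in>A. (d i)^2 / w i) * (\<Sum>i\<in>A. w i)"
    by (rule weighted_Cauchy_Schwarz[OF w])
  also have "\<dots> \<le> (\<Sum>i\<in>A. (d i)^2 * e i) * D"
    using le D nonneg by (intro mult_mono) (auto intro: sum_nonneg less_imp_le w)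
  finally have "(\<Sum>i\<in>A. \<bar>d i\<bar>)^2 \<le> (\<Sum>i\<in>A. (d i)^2 * e i) * D" .
  with nonneg show ?thesis
    by (cases "0 < D") (auto simp: pos_divide_le_eq intro: order.trans[OF divide_nonneg_nonpos])
qed

lemma inverse_ge_tangent:
  fixes u c :: real
  assumes "0 < u" "0 < c"
  shows "2 / c - u / c^2 \<le> 1 / u"
proof -
  have "0 \<le> (u - c)^2" by simp
  with assms show ?thesis
    by (simp add: field_simps power2_eq_square)
qed

lemma integral_eq_cmult_if_nn_integral_eq:
  fixes f g :: "'a \<Rightarrow> real"
  assumes f: "\<And>x. 0 \<le> f x" and g: "\<And>x. 0 \<le> g x" and c: "0 \<le> c"
    and int_g: "integrable (measure_pmf M) g"
    and eq: "(\<integral>\<^sup>+x. f x \<partial>M) = ennreal c * (\<integral>\<^sup>+x. g x \<partial>M)"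
  shows "integrable M f" "integral\<^sup>L M f = c * integral\<^sup>L M g"
proof -
  have "(\<integral>\<^sup>+x. g x \<partial>M) < \<infinity>"
    using int_g g by (simp add: integrable_iff_bounded)
  then show "integrable M f"
    using f by (intro integrableI_nonneg) (auto simp: eq ennreal_mult_less_top)
  have "integral\<^sup>L M f = enn2real (\<integral>\<^sup>+x. f x \<partial>M)"
    using f by (intro integral_eq_nn_integral) auto
  also have "\<dots> = c * enn2real (\<integral>\<^sup>+x. g x \<partial>M)"
    using c by (simp add: eq enn2real_mult)
  also have "enn2real (\<integral>\<^sup>+x. g x \<partial>M) = integral\<^sup>L M g"
    using g by (intro integral_eq_nn_integral[symmetric]) auto
  finally show "integral\<^sup>L M f = c * integral\<^sup>L M g" .
qed

lemma nn_integral_poisson0_times_count: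
  assumes "0 \<le> r"
  shows "(\<integral>\<^sup>+k. ennreal (real k) * f k \<partial>poisson0 r) = ennreal r * (\<integral>\<^sup>+k. f (Suc k) \<partial>poisson0 r)"
proof (cases "r = 0")
  case True
  then show ?thesis by (simp add: poisson0_def)
next
  case False
  with assms have r: "0 < r" by simp
  have "pmf (poisson0 r) (Suc k) * real (Suc k) = r * pmf (poisson0 r) k" for k
    using r by (simp add: poisson0_def field_simps del: of_nat_Suc)
  then have "ennreal (pmf (poisson0 r) (Suc k)) * ennreal (real (Suc k))
      = ennreal r * ennreal (pmf (poisson0 r) k)" for k
    using r by (simp only: ennreal_mult[symmetric] pmf_nonneg of_nat_0_le_iff less_imp_le)
  then have step: "ennreal (pmf (poisson0 r) (Suc k)) * (ennreal (real (Suc k)) * f (Suc k))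
      = ennreal r * (ennreal (pmf (poisson0 r) k) * f (Suc k))" for k
    by (metis mult.assoc)
  have "(\<integral>\<^sup>+k. ennreal (real k) * f k \<partial>poisson0 r)
      = (\<Sum>k. ennreal (pmf (poisson0 r) k) * (ennreal (real k) * f k))"
    by (simp add: nn_integral_measure_pmf nn_integral_count_space_nat)
  also have "\<dots> = (\<Sum>k. ennreal (pmf (poisson0 r) (Suc k)) * (ennreal (real (Suc k)) * f (Suc k)))"
    by (subst suminf_offset[where i=1]) auto
  also have "\<dots> = ennreal r * (\<Sum>k. ennreal (pmf (poisson0 r) k) * f (Suc k))"
    by (simp only: step ennreal_suminf_cmult)
  also have "\<dots> = ennreal r * (\<integral>\<^sup>+k. f (Suc k) \<partial>poisson0 r)"
    by (simp add: nn_integral_measure_pmf nn_integral_count_space_nat)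
  finally show ?thesis .
qed

lemma expectation_poisson0:
  assumes "0 \<le> r"
  shows "integrable (poisson0 r) real" "measure_pmf.expectation (poisson0 r) real = r"
proof -
  have "(\<integral>\<^sup>+k. ennreal (real k) \<partial>poisson0 r) = ennreal r * (\<integral>\<^sup>+k. ennreal 1 \<partial>poisson0 r)"
    using nn_integral_poisson0_times_count[OF assms, where f="\<lambda>_. 1"] by simp
  from integral_eq_cmult_if_nn_integral_eq[OF _ _ assms _ this]
  show "integrable (poisson0 r) real" "measure_pmf.expectation (poisson0 r) real = r"
    by simp_all
qed

abbreviation poisson_pair :: "real \<Rightarrow> real \<Rightarrow> (nat \<times> nat) pmf" where
  "poisson_pair a b \<equiv> pair_pmf (poisson0 a) (poisson0 b)"

lemma nn_integral_poisson_pair_swap: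
  "(\<integral>\<^sup>+w. f w \<partial>poisson_pair a b) = (\<integral>\<^sup>+w. f (snd w, fst w) \<partial>poisson_pair b a)"
  by (subst pair_commute_pmf) (simp add: case_prod_beta)

lemma nn_integral_poisson_pair_fst_times:
  assumes "0 \<le> a"
  shows "(\<integral>\<^sup>+w. ennreal (real (fst w)) * g w \<partial>poisson_pair a b)
    = ennreal a * (\<integral>\<^sup>+w. g (Suc (fst w), snd w) \<partial>poisson_pair a b)"
proof -
  have "(\<integral>\<^sup>+w. ennreal (real (fst w)) * g w \<partial>poisson_pair a b)
      = (\<integral>\<^sup>+x. ennreal (real x) * (\<integral>\<^sup>+y. g (x, y) \<partial>poisson0 b) \<partial>poisson0 a)"
    by (simp add: nn_integral_pair_pmf' nn_integral_cmult)
  also have "\<dots> = ennreal a * (\<integral>\<^sup>+x. \<integral>\<^sup>+y. g (Suc x, y) \<partial>poisson0 b \<partial>poisson0 a)"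
    by (rule nn_integral_poisson0_times_count[OF assms])
  finally show ?thesis
    by (simp add: nn_integral_pair_pmf')
qed

lemma nn_integral_poisson_pair_snd_times:
  assumes "0 \<le> b"
  shows "(\<integral>\<^sup>+w. ennreal (real (snd w)) * g w \<partial>poisson_pair a b)
    = ennreal b * (\<integral>\<^sup>+w. g (fst w, Suc (snd w)) \<partial>poisson_pair a b)"
  by (simp add: nn_integral_poisson_pair_swap[where a=a and b=b]
      nn_integral_poisson_pair_fst_times[OF assms])

definition inv_total_plus_two :: "nat \<times> nat \<Rightarrow> real" where
  "inv_total_plus_two w = 1 / (real (fst w + snd w) + 2)"

lemma integrable_inv_total_plus_two: "integrable (measure_pmf M) inv_total_plus_two"
  by (rule measure_pmf.integrable_const_bound[where B=1]) (auto simp: inv_total_plus_two_def)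

lemma nn_integral_poisson_pair_fst_falling:
  assumes a: "0 \<le> a"
  shows "(\<integral>\<^sup>+w. ennreal (real (fst w) * real (fst w - 1) / real (fst w + snd w)) \<partial>poisson_pair a b)
    = ennreal (a^2) * (\<integral>\<^sup>+w. ennreal (inv_total_plus_two w) \<partial>poisson_pair a b)"
proof -
  have "(\<integral>\<^sup>+w. ennreal (real (fst w) * real (fst w - 1) / real (fst w + snd w)) \<partial>poisson_pair a b)
      = ennreal a * (\<integral>\<^sup>+w. ennreal (real (fst w)) * ennreal (1 / real (Suc (fst w) + snd w)) \<partial>poisson_pair a b)"
    using nn_integral_poisson_pair_fst_times[OF a,
        where g="\<lambda>w. ennreal (real (fst w - 1) / real (fst w + snd w))" and b=b]
    by (simp add: ennreal_mult[symmetric])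
  also have "\<dots> = ennreal a * (ennreal a * (\<integral>\<^sup>+w. ennreal (inv_total_plus_two w) \<partial>poisson_pair a b))"
    using nn_integral_poisson_pair_fst_times[OF a,
        where g="\<lambda>w. ennreal (1 / real (Suc (fst w) + snd w))" and b=b]
    by (simp add: inv_total_plus_two_def add_ac)
  finally show ?thesis
    using a by (simp add: power2_eq_square ennreal_mult mult.assoc)
qed

lemma nn_integral_poisson_pair_snd_falling:
  assumes "0 \<le> b"
  shows "(\<integral>\<^sup>+w. ennreal (real (snd w) * real (snd w - 1) / real (fst w + snd w)) \<partial>poisson_pair a b)
    = ennreal (b^2) * (\<integral>\<^sup>+w. ennreal (inv_total_plus_two w) \<partial>poisson_pair a b)"
  using nn_integral_poisson_pair_fst_falling[OF assms, where b=a]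
  by (simp add: nn_integral_poisson_pair_swap[where a=a and b=b] inv_total_plus_two_def add.commute)

lemma nn_integral_poisson_pair_fst_snd:
  assumes a: "0 \<le> a" and b: "0 \<le> b"
  shows "(\<integral>\<^sup>+w. ennreal (real (fst w) * real (snd w) / real (fst w + snd w)) \<partial>poisson_pair a b)
    = ennreal (a * b) * (\<integral>\<^sup>+w. ennreal (inv_total_plus_two w) \<partial>poisson_pair a b)"
proof -
  have "(\<integral>\<^sup>+w. ennreal (real (fst w) * real (snd w) / real (fst w + snd w)) \<partial>poisson_pair a b)
      = ennreal a * (\<integral>\<^sup>+w. ennreal (real (snd w)) * ennreal (1 / real (Suc (fst w) + snd w)) \<partial>poisson_pair a b)"
    using nn_integral_poisson_pair_fst_times[OF a,
        where g="\<lambda>w. ennreal (real (snd w) / real (fst w + snd w))" and b=b]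
    by (simp add: ennreal_mult[symmetric])
  also have "\<dots> = ennreal a * (ennreal b * (\<integral>\<^sup>+w. ennreal (inv_total_plus_two w) \<partial>poisson_pair a b))"
    using nn_integral_poisson_pair_snd_times[OF b,
        where g="\<lambda>w. ennreal (1 / real (Suc (fst w) + snd w))" and a=a]
    by (simp add: inv_total_plus_two_def add_ac)
  finally show ?thesis
    using a b by (simp add: ennreal_mult mult.assoc)
qed

lemma integral_inv_total_plus_two_ge:
  assumes a: "0 \<le> a" and b: "0 \<le> b"
  shows "1 / (a + b + 2) \<le> integral\<^sup>L (poisson_pair a b) inv_total_plus_two"
proof -
  define c where "c = a + b + 2"
  have c: "0 < c" using a b by (simp add: c_def)
  define T where "T = (\<lambda>w::nat \<times> nat. 2 / c - (real (fst w) + real (snd w) + 2) / c^2)"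
  have X: "integrable (poisson_pair a b) (\<lambda>w. real (fst w))"
    using expectation_poisson0(1)[OF a] integrable_map_pmf_eq[of fst "poisson_pair a b" real]
    by (simp add: map_fst_pair_pmf)
  have Y: "integrable (poisson_pair a b) (\<lambda>w. real (snd w))"
    using expectation_poisson0(1)[OF b] integrable_map_pmf_eq[of snd "poisson_pair a b" real]
    by (simp add: map_snd_pair_pmf)
  have "1 / (a + b + 2) = 2 / c - (a + b + 2) / c^2"
    using c unfolding c_def[symmetric] by (simp add: field_simps power2_eq_square)
  also have "\<dots> = integral\<^sup>L (poisson_pair a b) T"
    using X Y by (simp add: T_def expectation_poisson0(2)[OF a] expectation_poisson0(2)[OF b])
  also have "\<dots> \<le> integral\<^sup>L (poisson_pair a b) inv_total_plus_two"
    using X Y c by (intro integral_mono integrable_inv_total_plus_two)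
      (auto simp: T_def inv_total_plus_two_def intro: inverse_ge_tangent)
  finally show ?thesis .
qed

lemma Zstat_eq_factorial_moments:
  "Zstat m1 m2 x y = m2^2 * (real x * real (x - 1) / real (x + y))
     - 2 * m1 * m2 * (real x * real y / real (x + y))
     + m1^2 * (real y * real (y - 1) / real (x + y))"
proof (cases "x + y = 0")
  case True
  then show ?thesis by (simp add: Zstat_def)
next
  case False
  have x: "real x * real (x - 1) = real x * (real x - 1)" by (cases x) auto
  have y: "real y * real (y - 1) = real y * (real y - 1)" by (cases y) auto
  have "real x + real y \<noteq> 0" using False by linarith
  with False show ?thesis unfolding Zstat_def x y
    by (simp add: field_simps power2_eq_square del: of_nat_add)
qed

lemma integral_Zstat_poisson_pair:
  assumes a: "0 \<le> a" and b: "0 \<le> b"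
  shows "integrable (poisson_pair a b) (\<lambda>w. Zstat m1 m2 (fst w) (snd w))"
    "integral\<^sup>L (poisson_pair a b) (\<lambda>w. Zstat m1 m2 (fst w) (snd w))
      = (m2 * a - m1 * b)^2 * integral\<^sup>L (poisson_pair a b) inv_total_plus_two"
proof -
  note transfer = integral_eq_cmult_if_nn_integral_eq[OF _ _ _ integrable_inv_total_plus_two]
  define F1 where "F1 = (\<lambda>w::nat \<times> nat. real (fst w) * real (fst w - 1) / real (fst w + snd w))"
  define F2 where "F2 = (\<lambda>w::nat \<times> nat. real (fst w) * real (snd w) / real (fst w + snd w))"
  define F3 where "F3 = (\<lambda>w::nat \<times> nat. real (snd w) * real (snd w - 1) / real (fst w + snd w))"
  have F1: "integrable (poisson_pair a b) F1"
    "integral\<^sup>L (poisson_pair a b) F1 = a^2 * integral\<^sup>L (poisson_pair a b) inv_total_plus_two"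
    using transfer[OF _ _ _ nn_integral_poisson_pair_fst_falling[OF a, of b]]
    by (auto simp: F1_def inv_total_plus_two_def)
  have F2: "integrable (poisson_pair a b) F2"
    "integral\<^sup>L (poisson_pair a b) F2 = (a * b) * integral\<^sup>L (poisson_pair a b) inv_total_plus_two"
    using transfer[OF _ _ _ nn_integral_poisson_pair_fst_snd[OF a b]] a b
    by (auto simp: F2_def inv_total_plus_two_def)
  have F3: "integrable (poisson_pair a b) F3"
    "integral\<^sup>L (poisson_pair a b) F3 = b^2 * integral\<^sup>L (poisson_pair a b) inv_total_plus_two"
    using transfer[OF _ _ _ nn_integral_poisson_pair_snd_falling[OF b, of a]]
    by (auto simp: F3_def inv_total_plus_two_def)
  have Z: "(\<lambda>w. Zstat m1 m2 (fst w) (snd w)) = (\<lambda>w. m2^2 * F1 w - 2 * m1 * m2 * F2 w + m1^2 * F3 w)"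
    by (simp add: Zstat_eq_factorial_moments F1_def F2_def F3_def)
  show "integrable (poisson_pair a b) (\<lambda>w. Zstat m1 m2 (fst w) (snd w))"
    unfolding Z using F1 F2 F3 by auto
  show "integral\<^sup>L (poisson_pair a b) (\<lambda>w. Zstat m1 m2 (fst w) (snd w))
      = (m2 * a - m1 * b)^2 * integral\<^sup>L (poisson_pair a b) inv_total_plus_two"
    unfolding Z using F1 F2 F3 by (simp add: power2_eq_square algebra_simps)
qed

lemma expectation_sum_Zstat_joint_law:
  assumes A: "A \<subseteq> {1..n}" and p: "\<And>i. i \<in> A \<Longrightarrow> 0 \<le> p i" and q: "\<And>i. i \<in> A \<Longrightarrow> 0 \<le> q i"
    and "0 \<le> m1" "0 \<le> m2"
  shows "measure_pmf.expectation (joint_law n m1 m2 p q)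
      (\<lambda>\<omega>. \<Sum>i\<in>A. Zstat m1 m2 (fst (\<omega> i)) (snd (\<omega> i)))
    = (\<Sum>i\<in>A. (m1 * m2 * (p i - q i))^2
        * integral\<^sup>L (poisson_pair (m1 * p i) (m2 * q i)) inv_total_plus_two)"
proof -
  have rates: "0 \<le> m1 * p i" "0 \<le> m2 * q i" if "i \<in> A" for i
    using that p q assms(4,5) by simp_all
  have marginal: "map_pmf (\<lambda>\<omega>. \<omega> i) (joint_law n m1 m2 p q) = poisson_pair (m1 * p i) (m2 * q i)"
    if "i \<in> A" for i
    using that A unfolding joint_law_def by (subst Pi_pmf_component) auto
  have "integrable (map_pmf (\<lambda>\<omega>. \<omega> i) (joint_law n m1 m2 p q)) (\<lambda>w. Zstat m1 m2 (fst w) (snd w))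
      \<and> integral\<^sup>L (map_pmf (\<lambda>\<omega>. \<omega> i) (joint_law n m1 m2 p q)) (\<lambda>w. Zstat m1 m2 (fst w) (snd w))
        = (m1 * m2 * (p i - q i))^2 * integral\<^sup>L (poisson_pair (m1 * p i) (m2 * q i)) inv_total_plus_two"
    if "i \<in> A" for i
    using integral_Zstat_poisson_pair[OF rates[OF that], of m1 m2] unfolding marginal[OF that]
    by (simp add: algebra_simps power2_eq_square)
  then show ?thesis
    by (simp add: integral_sum)
qed

lemma sum_le_one_if_is_distribution:
  assumes "is_distribution n p" "A \<subseteq> {1..n}"
  shows "(\<Sum>i\<in>A. p i) \<le> 1"
proof -
  have "(\<Sum>i\<in>A. p i) \<le> (\<Sum>i=1..n. p i)"
    using assms by (intro sum_mono2) (auto simp: is_distribution_def)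
  then show ?thesis
    using assms(1) by (simp add: is_distribution_def)
qed

lemma sum_rates_plus_two_le:
  assumes "is_distribution n p" "is_distribution n q" "A \<subseteq> {1..n}" "0 \<le> m1" "0 \<le> m2"
  shows "(\<Sum>i\<in>A. m1 * p i + m2 * q i + 2) \<le> m1 + m2 + 2 * real n"
proof -
  have "(\<Sum>i\<in>A. m1 * p i + m2 * q i + 2) = m1 * (\<Sum>i\<in>A. p i) + m2 * (\<Sum>i\<in>A. q i) + 2 * real (card A)"
    by (simp add: sum.distrib sum_distrib_left)
  also have "\<dots> \<le> m1 + m2 + 2 * real n"
    using mult_left_le[OF sum_le_one_if_is_distribution[OF assms(1,3)] assms(4)]
      mult_left_le[OF sum_le_one_if_is_distribution[OF assms(2,3)] assms(5)]
      card_mono[OF _ assms(3)] by simp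
  finally show ?thesis .
qed

theorem lemma3:
  fixes n :: nat and m1 m2 :: real and p q :: "nat \<Rightarrow> real" and A :: "nat set"
  assumes "is_distribution n p" and "is_distribution n q"
    and "0 < m1" and "0 < m2" and "A \<subseteq> {1..n}"
  shows "((\<forall>i\<in>{1..n}. p i = q i) \<longrightarrow>
           measure_pmf.expectation (joint_law n m1 m2 p q)
             (\<lambda>\<omega>. \<Sum>i\<in>A. Zstat m1 m2 (fst (\<omega> i)) (snd (\<omega> i))) = 0) \<and>
         measure_pmf.expectation (joint_law n m1 m2 p q)
             (\<lambda>\<omega>. \<Sum>i\<in>A. Zstat m1 m2 (fst (\<omega> i)) (snd (\<omega> i)))
           \<ge> m1^2 * m2^2 * (\<Sum>i\<in>A. \<bar>p i - q i\<bar>)^2 / (4 * real n + m1 + m2)"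
proof -
  let ?E = "\<lambda>i. integral\<^sup>L (poisson_pair (m1 * p i) (m2 * q i)) inv_total_plus_two"
  let ?w = "\<lambda>i. m1 * p i + m2 * q i + 2"
  have nonneg: "0 \<le> p i" "0 \<le> q i" if "i \<in> A" for i
    using that assms(1,2,5) by (auto simp: is_distribution_def)
  have expectation: "measure_pmf.expectation (joint_law n m1 m2 p q)
      (\<lambda>\<omega>. \<Sum>i\<in>A. Zstat m1 m2 (fst (\<omega> i)) (snd (\<omega> i)))
    = (\<Sum>i\<in>A. (m1 * m2 * (p i - q i))^2 * ?E i)"
    using assms(3-5) nonneg by (intro expectation_sum_Zstat_joint_law) auto
  have "(\<Sum>i\<in>A. ?w i) \<le> 4 * real n + m1 + m2"
    using sum_rates_plus_two_le[OF assms(1,2,5) less_imp_le[OF assms(3)] less_imp_le[OF assms(4)]]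
    by simp
  then have "(\<Sum>i\<in>A. \<bar>m1 * m2 * (p i - q i)\<bar>)^2 / (4 * real n + m1 + m2)
      \<le> (\<Sum>i\<in>A. (m1 * m2 * (p i - q i))^2 * ?E i)"
    using nonneg assms(3,4) by (intro sum_abs_squared_div_le[where w="?w"])
      (auto simp: add_nonneg_pos integral_inv_total_plus_two_ge)
  moreover have "(\<Sum>i\<in>A. \<bar>m1 * m2 * (p i - q i)\<bar>)^2 = m1^2 * m2^2 * (\<Sum>i\<in>A. \<bar>p i - q i\<bar>)^2"
    using assms(3,4) by (simp add: abs_mult sum_distrib_left[symmetric] power_mult_distrib)
  moreover have "(\<Sum>i\<in>A. (m1 * m2 * (p i - q i))^2 * ?E i) = 0" if "\<forall>i\<in>{1..n}. p i = q i"
    using that assms(5) by (intro sum.neutral) auto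
  ultimately show ?thesis
    unfolding expectation by simp
qed

end
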